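(* Let $\alpha_0>0$, let $N\ge 1$ be an integer, and let $\gamma_1,\dots,\gamma_N$ be distinct positive real numbers. Then: (i) The determinant \[ \Delta_N(\gamma_1,\dots,\gamma_N)=\det\left(1,\ \frac{(\gamma_\sigma)_1}{(\gamma_\sigma+\alpha_0)_1},\ \dots,\ \frac{(\gamma_\sigma)_{N-1}}{(\gamma_\sigma+\alpha_0)_{N-1}}\right)_{\sigma=1,\dots,N} \] (the $\sigma$-th row being the displayed vector) is nonzero. (ii) The linear system \[ 1+\frac{(\gamma_\sigma)_1}{(\gamma_\sigma+\alpha_0)_1}b_1+\cdots+\frac{(\gamma_\sigma)_N}{(\gamma_\sigma+\alpha_0)_N}b_N=0,\qquad \sigma=1,\dots,N, \] in the unknowns $b_1,\dots,b_N$ has a unique solution, given by \[ b_{k+1}=\sum_{\ell=k}^{N-1}(-1)^{\ell+1}\frac{(\alpha_0-1)_{\ell-k}}{(\ell-k)!}\,\frac{(\alpha_0+\ell+1)_{N-\ell-1}}{(N-\ell-1)!}\prod_{\sigma=1}^N\frac{\gamma_\sigma+\alpha_0+\ell}{\gamma_\sigma},\qquad k=0,1,\dots,N-1. \] (iii) If $\gamma_0>0$ and $\gamma_0\neq\gamma_\sigma$ for $\sigma=1,\dots,N$, then with the $b_k$ from (ii), \[ 1+\frac{(\gamma_0)_1}{(\gamma_0+\alpha_0)_1}b_1+\cdots+\frac{(\gamma_0)_N}{(\gamma_0+\alpha_0)_N}b_N\neq 0. \]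
   Context: Pochhammer symbol: $(x)_0=1$ and $(x)_n=x(x+1)\cdots(x+n-1)$ for $n\ge1$. *)

theory Defs
  imports Complex_Main "Jordan_Normal_Form.Determinant"
begin

text \<open>The matrix of part (i): row sigma (sigma = 1..N, stored at index sigma-1)
  is (1, (g_sigma)_1/(g_sigma+a0)_1, ..., (g_sigma)_{N-1}/(g_sigma+a0)_{N-1}).\<close>
definition Delta_mat :: "real \<Rightarrow> nat \<Rightarrow> (nat \<Rightarrow> real) \<Rightarrow> real mat" where
  "Delta_mat a0 N g = mat N N (\<lambda>(i, j). pochhammer (g (i + 1)) j / pochhammer (g (i + 1) + a0) j)"

text \<open>The explicit solution b_{k+1}, k = 0..N-1.\<close>
definition bsol :: "real \<Rightarrow> nat \<Rightarrow> (nat \<Rightarrow> real) \<Rightarrow> nat \<Rightarrow> real" where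
  "bsol a0 N g k = (\<Sum>l = k..N - 1. (-1) ^ (l + 1)
       * (pochhammer (a0 - 1) (l - k) / fact (l - k))
       * (pochhammer (a0 + real l + 1) (N - l - 1) / fact (N - l - 1))
       * (\<Prod>s = 1..N. (g s + a0 + real l) / g s))"

definition lin_form :: "real \<Rightarrow> nat \<Rightarrow> (nat \<Rightarrow> real) \<Rightarrow> real \<Rightarrow> real" where
  "lin_form a0 N b x = 1 + (\<Sum>k = 1..N. pochhammer x k / pochhammer (x + a0) k * b k)"

end

theory Submission
  imports Defs "HOL-Computational_Algebra.Formal_Power_Series" "HOL-Computational_Algebra.Polynomial"
begin

text \<open>
  Multiplied by \<open>(x + a0)_N\<close>, the left-hand side \<open>1 + \<Sum>_k b_k (x)_k / (x + a0)_k\<close> of the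
  equations becomes a polynomial of degree at most \<open>N\<close> in \<open>x\<close>, written in the basis
  \<open>B_k(x) = (x)_k (x + a0 + k)_(N-k)\<close>. This basis is triangular with respect to evaluation at
  \<open>0, -1, \<dots>, -N\<close>, so a combination of the ratios \<open>(x)_k / (x + a0)_k\<close> that vanishes at more
  points than its degree is trivial; this gives (i) and the uniqueness in (ii). For the explicit
  solution the polynomial equals \<open>(a0)_N \<Prod>_s (g_s - x) / \<Prod>_s g_s\<close>: both sides agree at
  \<open>x = 0\<close> and at \<open>x = -a0 - l\<close> for \<open>l < N\<close>, where the comparison reduces to
  Chu--Vandermonde. As this product vanishes exactly at the \<open>g_s\<close>, (iii) follows as well.
\<close>

lemma poly_pochhammer: "poly (pochhammer p n) x = pochhammer (poly p x) n"
  by (induction n) (simp_all add: pochhammer_Suc)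

lemma degree_pochhammer_linear_le: "degree (pochhammer [:c, 1:] n) \<le> n"
proof (induction n)
  case 0
  then show ?case by simp
next
  case (Suc n)
  have "degree (pochhammer [:c, 1:] n * ([:c, 1:] + of_nat n))
      \<le> degree (pochhammer [:c, 1:] n) + degree ([:c, 1:] + of_nat n)"
    by (rule degree_mult_le)
  also have "degree ([:c, 1:] + (of_nat n :: 'a poly)) \<le> 1"
    by (rule degree_add_le) (auto simp: of_nat_poly)
  finally show ?case
    using Suc by (simp add: pochhammer_Suc)
qed

lemma pochhammer_div_fact_Vandermonde:
  fixes x y :: "'a::field_char_0"
  shows "(\<Sum>j = 0..n. pochhammer x (n - j) / fact (n - j) * (pochhammer y j / fact j))
       = pochhammer (x + y) n / fact n"
proof -
  have div_fact: "pochhammer z k / fact k = (-1) ^ k * ((- z) gchoose k)" for z :: 'a and k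
    by (simp add: gbinomial_pochhammer)
  have "(\<Sum>j = 0..n. pochhammer x (n - j) / fact (n - j) * (pochhammer y j / fact j))
      = (\<Sum>j = 0..n. (-1) ^ n * (((- y) gchoose j) * ((- x) gchoose (n - j))))"
  proof (rule sum.cong)
    fix j assume "j \<in> {0..n}"
    then have "(-1::'a) ^ (n - j) * (-1) ^ j = (-1) ^ n"
      by (simp flip: power_add)
    then show "pochhammer x (n - j) / fact (n - j) * (pochhammer y j / fact j)
        = (-1) ^ n * (((- y) gchoose j) * ((- x) gchoose (n - j)))"
      unfolding div_fact by (metis (no_types, lifting) mult.commute mult.left_commute)
  qed simp
  also have "\<dots> = (-1) ^ n * ((- y) + (- x) gchoose n)"
    by (simp add: sum_distrib_left[symmetric] gbinomial_Vandermonde)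
  also have "\<dots> = pochhammer (x + y) n / fact n"
    by (simp add: div_fact add.commute)
  finally show ?thesis .
qed

lemma pochhammer_of_nat_plus_one:
  "pochhammer (of_nat j + 1 :: 'a::field_char_0) r = fact (j + r) / fact j"
proof -
  have "fact (j + r) = (pochhammer 1 (j + r) :: 'a)"
    by (simp add: pochhammer_fact)
  also have "\<dots> = pochhammer 1 j * pochhammer (1 + of_nat j) r"
    by (simp add: pochhammer_product')
  also have "\<dots> = fact j * pochhammer (of_nat j + 1) r"
    by (simp add: pochhammer_fact add.commute)
  finally show ?thesis
    by simp
qed

lemma pochhammer_of_nat_diff_eq_0:
  assumes "m \<le> l" "l < N"
  shows "pochhammer (real m - real l) (N - m) = 0"
  unfolding pochhammer_eq_0_iff using assms by (intro exI[of _ "l - m"]) auto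

lemma pochhammer_minus_split:
  "pochhammer (- a - real l) (l + j + 1) = (-1) ^ (l + 1) * pochhammer a (l + 1) * pochhammer (1 - a) j"
proof -
  have "pochhammer (- a - real l) (l + 1) = (-1) ^ (l + 1) * pochhammer a (l + 1)"
    using pochhammer_minus[of "a + real l" "l + 1"] by (simp add: algebra_simps)
  moreover have "pochhammer (- a - real l) (l + j + 1) = pochhammer (- a - real l) (l + 1) * pochhammer (1 - a) j"
    using pochhammer_product'[of "- a - real l" "l + 1" j] by (simp add: ac_simps)
  ultimately show ?thesis
    by simp
qed

definition pochhammer_basis :: "real \<Rightarrow> nat \<Rightarrow> nat \<Rightarrow> real poly" where
  "pochhammer_basis a M k = pochhammer [:0, 1:] k * pochhammer [:a + of_nat k, 1:] (M - k)"

lemma poly_pochhammer_basis: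
  "poly (pochhammer_basis a M k) x = pochhammer x k * pochhammer (x + a + of_nat k) (M - k)"
  by (simp add: pochhammer_basis_def poly_pochhammer add.commute add.left_commute)

lemma degree_pochhammer_basis_le:
  assumes "k \<le> M"
  shows "degree (pochhammer_basis a M k) \<le> M"
  using assms degree_mult_le[of "pochhammer [:0, 1:] k" "pochhammer [:a + of_nat k, 1:] (M - k)"]
    degree_pochhammer_linear_le[of "0::real" k] degree_pochhammer_linear_le[of "a + of_nat k" "M - k"]
  unfolding pochhammer_basis_def by linarith

lemma pochhammer_ratio_mult_eq_poly_basis:
  assumes "pochhammer (x + a) M \<noteq> 0" "k \<le> M"
  shows "pochhammer x k / pochhammer (x + a) k * pochhammer (x + a) M = poly (pochhammer_basis a M k) x"
proof -
  have split: "pochhammer (x + a) M = pochhammer (x + a) k * pochhammer (x + a + of_nat k) (M - k)"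
    using pochhammer_product[OF assms(2), of "x + a"] by simp
  with assms have "pochhammer (x + a) k \<noteq> 0"
    by auto
  then show ?thesis
    unfolding poly_pochhammer_basis split by simp
qed

lemma poly_pochhammer_basis_below:
  assumes "j < k"
  shows "poly (pochhammer_basis a M k) (- of_nat j) = 0"
  using assms by (auto simp: poly_pochhammer_basis pochhammer_eq_0_iff)

lemma poly_pochhammer_basis_diagonal:
  assumes "a > 0"
  shows "poly (pochhammer_basis a M j) (- of_nat j) \<noteq> 0"
  using assms pochhammer_pos[of a "M - j"]
  by (auto simp: poly_pochhammer_basis pochhammer_eq_0_iff)

lemma pochhammer_basis_independent:
  assumes a: "a > 0" and zero: "(\<Sum>k\<le>M. smult (c k) (pochhammer_basis a M k)) = 0" and "j \<le> M"
  shows "c j = 0"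
  using \<open>j \<le> M\<close>
proof (induction j rule: less_induct)
  case (less j)
  have others: "(\<Sum>k\<in>{..M} - {j}. c k * poly (pochhammer_basis a M k) (- of_nat j)) = 0"
  proof (rule sum.neutral, rule ballI)
    fix k assume "k \<in> {..M} - {j}"
    then show "c k * poly (pochhammer_basis a M k) (- of_nat j) = 0"
      using less.IH poly_pochhammer_basis_below[of j k] by (cases "k < j") auto
  qed
  have "0 = poly (\<Sum>k\<le>M. smult (c k) (pochhammer_basis a M k)) (- of_nat j)"
    using zero by simp
  also have "\<dots> = (\<Sum>k\<le>M. c k * poly (pochhammer_basis a M k) (- of_nat j))"
    by (simp add: poly_sum)
  also have "\<dots> = c j * poly (pochhammer_basis a M j) (- of_nat j)"
    using less.prems others by (subst sum.remove[of _ j]) auto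
  finally show ?case
    using poly_pochhammer_basis_diagonal[OF a] by simp
qed

lemma pochhammer_ratios_independent:
  fixes a :: real and c :: "nat \<Rightarrow> real"
  assumes a: "a > 0" and card: "card S > M" and nonneg: "\<And>x. x \<in> S \<Longrightarrow> x \<ge> 0"
    and zero: "\<And>x. x \<in> S \<Longrightarrow> (\<Sum>k\<le>M. c k * (pochhammer x k / pochhammer (x + a) k)) = 0"
    and "j \<le> M"
  shows "c j = 0"
proof (rule pochhammer_basis_independent[OF a _ \<open>j \<le> M\<close>])
  define p where "p = (\<Sum>k\<le>M. smult (c k) (pochhammer_basis a M k))"
  have "degree p \<le> M"
    unfolding p_def
    by (intro degree_sum_le) (auto intro: order.trans[OF degree_smult_le] degree_pochhammer_basis_le)
  moreover have "poly p x = poly 0 x" if "x \<in> S" for x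
  proof -
    have "pochhammer (x + a) M > 0"
      using nonneg[OF that] a by (intro pochhammer_pos) simp
    then have "poly p x = (\<Sum>k\<le>M. c k * (pochhammer x k / pochhammer (x + a) k)) * pochhammer (x + a) M"
      unfolding p_def poly_sum sum_distrib_right
      by (intro sum.cong refl) (simp add: pochhammer_ratio_mult_eq_poly_basis[symmetric])
    then show ?thesis
      using zero[OF that] by simp
  qed
  ultimately show "p = 0"
    using card by (intro poly_eqI_degree[of S]) auto
qed

definition bsol_coeff :: "real \<Rightarrow> nat \<Rightarrow> nat \<Rightarrow> nat \<Rightarrow> real" where
  "bsol_coeff a N k l = (-1) ^ (l + 1) * (pochhammer (a - 1) (l - k) / fact (l - k))
       * (pochhammer (a + real l + 1) (N - l - 1) / fact (N - l - 1))"

lemma bsol_eq_sum_coeff: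
  "bsol a0 N g k = (\<Sum>l = k..N - 1. bsol_coeff a0 N k l * (\<Prod>s = 1..N. (g s + a0 + real l) / g s))"
  unfolding bsol_def bsol_coeff_def by simp

lemma bsol_coeff_basis_summand:
  assumes "l + n < N" "j \<le> n"
  shows "bsol_coeff a N (l + j) (l + n) * poly (pochhammer_basis a N (l + j + 1)) (- a - real l)
       = (-1) ^ n * pochhammer a (l + 1) * fact (N - l - 1)
         * (pochhammer (a + real (l + n) + 1) (N - (l + n) - 1) / fact (N - (l + n) - 1))
         * (pochhammer (a - 1) (n - j) / fact (n - j) * (pochhammer (1 - a) j / fact j))"
proof -
  have "j + (N - (l + j + 1)) = N - l - 1"
    using assms by simp
  then have tail: "pochhammer (real j + 1) (N - (l + j + 1)) = fact (N - l - 1) / fact j"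
    using pochhammer_of_nat_plus_one[of j "N - (l + j + 1)", where 'a=real] by simp
  have arg: "- a - real l + a + real (l + j + 1) = real j + 1"
    by simp
  have basis: "poly (pochhammer_basis a N (l + j + 1)) (- a - real l)
      = (-1) ^ (l + 1) * pochhammer a (l + 1) * pochhammer (1 - a) j * (fact (N - l - 1) / fact j)"
    unfolding poly_pochhammer_basis arg pochhammer_minus_split tail by simp
  have coeff: "bsol_coeff a N (l + j) (l + n)
      = (-1) ^ (l + n + 1) * (pochhammer (a - 1) (n - j) / fact (n - j))
        * (pochhammer (a + real (l + n) + 1) (N - (l + n) - 1) / fact (N - (l + n) - 1))"
    unfolding bsol_coeff_def by simp
  have sign: "(-1::real) ^ (l + n + 1) * (-1) ^ (l + 1) = (-1) ^ n"
    by (simp add: power_add flip: power_mult_distrib)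
  show ?thesis
    unfolding basis coeff by (simp add: sign[symmetric] field_simps)
qed

text \<open>After shifting the summation index this is Chu--Vandermonde for \<open>(a - 1) + (1 - a) = 0\<close>.\<close>

lemma bsol_coeff_orthogonal:
  assumes lN: "l < N" and l'N: "l' < N"
  shows "(\<Sum>m = 1..l' + 1. bsol_coeff a N (m - 1) l' * poly (pochhammer_basis a N m) (- a - real l))
       = (if l = l' then pochhammer a N else 0)"
proof -
  define f where "f m = bsol_coeff a N (m - 1) l' * poly (pochhammer_basis a N m) (- a - real l)" for m
  have f_low: "f m = 0" if "m \<le> l" for m
    using pochhammer_of_nat_diff_eq_0[OF that lN] by (simp add: f_def poly_pochhammer_basis)
  show ?thesis
  proof (cases "l' < l")
    case True
    then show ?thesis
      using f_low unfolding f_def[symmetric] by (auto intro!: sum.neutral)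
  next
    case False
    then obtain n where l': "l' = l + n"
      using le_Suc_ex not_less by blast
    define K where "K = (-1) ^ n * pochhammer a (l + 1) * fact (N - l - 1)
      * (pochhammer (a + real (l + n) + 1) (N - (l + n) - 1) / fact (N - (l + n) - 1))"
    have "(\<Sum>m = 1..l' + 1. f m) = (\<Sum>m = l + 1..l' + 1. f m)"
      using f_low by (intro sum.mono_neutral_right) auto
    also have "\<dots> = (\<Sum>j = 0..n. f (l + j + 1))"
      using sum.shift_bounds_cl_nat_ivl[of f 0 "l + 1" n] l' by (simp add: ac_simps)
    also have "\<dots> = K * (\<Sum>j = 0..n. pochhammer (a - 1) (n - j) / fact (n - j) * (pochhammer (1 - a) j / fact j))"
      unfolding sum_distrib_left f_def K_def
      using bsol_coeff_basis_summand[of l n N] l' l'N by (intro sum.cong) simp_all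
    also have "\<dots> = K * (pochhammer 0 n / fact n)"
      unfolding pochhammer_div_fact_Vandermonde by simp
    also have "\<dots> = (if l = l' then pochhammer a N else 0)"
    proof (cases "n = 0")
      case True
      have "pochhammer a N = pochhammer a (l + 1) * pochhammer (a + real l + 1) (N - l - 1)"
        using pochhammer_product[of "l + 1" N a] lN by (simp add: add_ac)
      then show ?thesis
        using True l' by (simp add: K_def)
    next
      case False
      then show ?thesis
        using l' by (simp add: pochhammer_0_left)
    qed
    finally show ?thesis
      unfolding f_def .
  qed
qed

definition lin_poly :: "real \<Rightarrow> nat \<Rightarrow> (nat \<Rightarrow> real) \<Rightarrow> real poly" where
  "lin_poly a0 N b = pochhammer_basis a0 N 0 + (\<Sum>m = 1..N. smult (b m) (pochhammer_basis a0 N m))"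

lemma degree_lin_poly_le: "degree (lin_poly a0 N b) \<le> N"
  unfolding lin_poly_def
  by (intro degree_add_le degree_pochhammer_basis_le degree_sum_le)
    (auto intro: order.trans[OF degree_smult_le] degree_pochhammer_basis_le)

lemma lin_form_mult_pochhammer:
  assumes "pochhammer (x + a0) N \<noteq> 0"
  shows "lin_form a0 N b x * pochhammer (x + a0) N = poly (lin_poly a0 N b) x"
proof -
  have "lin_form a0 N b x * pochhammer (x + a0) N
      = pochhammer (x + a0) N + (\<Sum>k = 1..N. b k * (pochhammer x k / pochhammer (x + a0) k * pochhammer (x + a0) N))"
    unfolding lin_form_def by (simp add: distrib_left sum_distrib_left mult_ac)
  also have "\<dots> = poly (pochhammer_basis a0 N 0) x + (\<Sum>k = 1..N. b k * poly (pochhammer_basis a0 N k) x)"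
    using pochhammer_ratio_mult_eq_poly_basis[OF assms] by (simp add: poly_pochhammer_basis)
  finally show ?thesis
    by (simp add: lin_poly_def poly_sum)
qed

lemma poly_lin_poly_bsol_at_shift:
  assumes lN: "l < N"
  shows "poly (lin_poly a0 N (\<lambda>m. bsol a0 N g (m - 1))) (- a0 - real l)
       = pochhammer a0 N * (\<Prod>s = 1..N. (g s + a0 + real l) / g s)"
proof -
  define pi where "pi l = (\<Prod>s = 1..N. (g s + a0 + real l) / g s)" for l :: nat
  define B where "B m = poly (pochhammer_basis a0 N m) (- a0 - real l)" for m
  have B0: "B 0 = 0"
    using pochhammer_of_nat_diff_eq_0[of 0 l N] lN by (simp add: B_def poly_pochhammer_basis)
  have "poly (lin_poly a0 N (\<lambda>m. bsol a0 N g (m - 1))) (- a0 - real l) = (\<Sum>m = 1..N. bsol a0 N g (m - 1) * B m)"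
    unfolding lin_poly_def poly_add poly_sum poly_smult B_def[symmetric] B0 by simp
  also have "\<dots> = (\<Sum>m = 1..N. \<Sum>l'\<in>{l'\<in>{..<N}. m - 1 \<le> l'}. bsol_coeff a0 N (m - 1) l' * pi l' * B m)"
  proof (rule sum.cong[OF refl])
    fix m assume "m \<in> {1..N}"
    then have "{l'\<in>{..<N}. m - 1 \<le> l'} = {m - 1..N - 1}"
      by auto
    then show "bsol a0 N g (m - 1) * B m = (\<Sum>l'\<in>{l'\<in>{..<N}. m - 1 \<le> l'}. bsol_coeff a0 N (m - 1) l' * pi l' * B m)"
      unfolding bsol_eq_sum_coeff pi_def by (simp add: sum_distrib_right)
  qed
  also have "\<dots> = (\<Sum>l'<N. \<Sum>m | m \<in> {1..N} \<and> m - 1 \<le> l'. bsol_coeff a0 N (m - 1) l' * pi l' * B m)"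
    by (rule sum.swap_restrict) auto
  also have "\<dots> = (\<Sum>l'<N. pi l' * (if l = l' then pochhammer a0 N else 0))"
  proof (rule sum.cong[OF refl])
    fix l' assume l': "l' \<in> {..<N}"
    then have "{m. m \<in> {1..N} \<and> m - 1 \<le> l'} = {1..l' + 1}"
      by auto
    then have "(\<Sum>m | m \<in> {1..N} \<and> m - 1 \<le> l'. bsol_coeff a0 N (m - 1) l' * pi l' * B m)
        = pi l' * (\<Sum>m = 1..l' + 1. bsol_coeff a0 N (m - 1) l' * B m)"
      unfolding sum_distrib_left by (intro sum.cong) (simp_all add: mult_ac)
    also have "\<dots> = pi l' * (if l = l' then pochhammer a0 N else 0)"
      unfolding B_def using bsol_coeff_orthogonal[OF lN, of l' a0] l' by simp
    finally show "(\<Sum>m | m \<in> {1..N} \<and> m - 1 \<le> l'. bsol_coeff a0 N (m - 1) l' * pi l' * B m)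
        = pi l' * (if l = l' then pochhammer a0 N else 0)" .
  qed
  also have "\<dots> = pochhammer a0 N * pi l"
    using lN by (simp add: if_distrib mult.commute cong: if_cong)
  finally show ?thesis
    unfolding pi_def .
qed

lemma lin_poly_bsol:
  assumes a0: "a0 > 0" and g: "\<And>s. s \<in> {1..N} \<Longrightarrow> g s \<noteq> 0"
  shows "lin_poly a0 N (\<lambda>m. bsol a0 N g (m - 1))
       = smult (pochhammer a0 N / (\<Prod>s = 1..N. g s)) (\<Prod>s = 1..N. [:g s, -1:])"
    (is "?Q = ?P")
proof (rule poly_eqI_degree)
  define S where "S = insert 0 ((\<lambda>l. - a0 - real l) ` {..<N})"
  have G: "(\<Prod>s = 1..N. g s) \<noteq> 0"
    using g by simp
  have poly_P: "poly ?P y = pochhammer a0 N / (\<Prod>s = 1..N. g s) * (\<Prod>s = 1..N. g s - y)" for y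
    by (simp add: poly_prod)
  have "0 \<notin> (\<lambda>l. - a0 - real l) ` {..<N}" "inj_on (\<lambda>l. - a0 - real l) {..<N}"
    using a0 by (auto simp: inj_on_def)
  then show "card S > degree ?Q" "card S > degree ?P"
    using degree_lin_poly_le[of a0 N] degree_prod_sum_le[of "{1..N}" "\<lambda>s. [:g s, -1:]"]
      degree_smult_le[of "pochhammer a0 N / (\<Prod>s = 1..N. g s)" "\<Prod>s = 1..N. [:g s, -1:]"]
    unfolding S_def by (simp_all add: card_image less_Suc_eq_le)
  fix x assume "x \<in> S"
  then consider "x = 0" | l where "l < N" "x = - a0 - real l"
    unfolding S_def by auto
  then show "poly ?Q x = poly ?P x"
  proof cases
    case 1
    then show ?thesis
      using G by (simp add: lin_poly_def poly_P poly_sum poly_prod poly_pochhammer_basis pochhammer_0_left)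
  next
    case (2 l)
    have "(\<Prod>s = 1..N. g s - (- a0 - real l)) = (\<Prod>s = 1..N. g s + a0 + real l)"
      by (simp add: algebra_simps)
    then show ?thesis
      unfolding \<open>x = - a0 - real l\<close> poly_P poly_lin_poly_bsol_at_shift[OF \<open>l < N\<close>]
      by (simp add: prod_dividef)
  qed
qed

lemma lin_form_bsol:
  assumes a0: "a0 > 0" and g: "\<And>s. s \<in> {1..N} \<Longrightarrow> g s \<noteq> 0" and x: "pochhammer (x + a0) N \<noteq> 0"
  shows "lin_form a0 N (\<lambda>k. bsol a0 N g (k - 1)) x
       = pochhammer a0 N * (\<Prod>s = 1..N. g s - x) / ((\<Prod>s = 1..N. g s) * pochhammer (x + a0) N)"
proof -
  have "lin_poly a0 N (\<lambda>k. bsol a0 N g (k - 1))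
      = smult (pochhammer a0 N / (\<Prod>s = 1..N. g s)) (\<Prod>s = 1..N. [:g s, -1:])"
    using a0 g by (rule lin_poly_bsol)
  then have "poly (lin_poly a0 N (\<lambda>k. bsol a0 N g (k - 1))) x
      = pochhammer a0 N / (\<Prod>s = 1..N. g s) * (\<Prod>s = 1..N. g s - x)"
    by (simp add: poly_prod)
  then have "lin_form a0 N (\<lambda>k. bsol a0 N g (k - 1)) x * pochhammer (x + a0) N
      = pochhammer a0 N / (\<Prod>s = 1..N. g s) * (\<Prod>s = 1..N. g s - x)"
    using lin_form_mult_pochhammer[OF x] by simp
  moreover have "(\<Prod>s = 1..N. g s) \<noteq> 0"
    using g by simp
  ultimately show ?thesis
    using x by (simp add: field_simps)
qed

lemma lin_form_bsol_eq_0_iff: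
  assumes a0: "a0 > 0" and gpos: "\<And>s. s \<in> {1..N} \<Longrightarrow> g s > 0" and x: "x \<ge> 0"
  shows "lin_form a0 N (\<lambda>k. bsol a0 N g (k - 1)) x = 0 \<longleftrightarrow> x \<in> g ` {1..N}"
proof -
  have pos: "pochhammer a0 N > 0" "pochhammer (x + a0) N > 0" "(\<Prod>s = 1..N. g s) > 0"
    using a0 x gpos by (auto intro: pochhammer_pos prod_pos)
  have "g s \<noteq> 0" if "s \<in> {1..N}" for s
    using gpos[OF that] by simp
  then have "lin_form a0 N (\<lambda>k. bsol a0 N g (k - 1)) x = 0 \<longleftrightarrow> (\<Prod>s = 1..N. g s - x) = 0"
    using lin_form_bsol[OF a0, where g=g and x=x] pos by simp
  also have "\<dots> \<longleftrightarrow> x \<in> g ` {1..N}"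
    by (auto simp: prod_zero_iff)
  finally show ?thesis .
qed

lemma det_Delta_mat_neq_0:
  assumes a0: "a0 > 0" and N: "N \<ge> 1" and gpos: "\<And>s. s \<in> {1..N} \<Longrightarrow> g s > 0"
    and gdist: "inj_on g {1..N}"
  shows "det (Delta_mat a0 N g) \<noteq> 0"
proof
  assume "det (Delta_mat a0 N g) = 0"
  moreover have "Delta_mat a0 N g \<in> carrier_mat N N"
    unfolding Delta_mat_def by simp
  ultimately obtain v where v: "v \<in> carrier_vec N" "v \<noteq> 0\<^sub>v N" "Delta_mat a0 N g *\<^sub>v v = 0\<^sub>v N"
    using det_0_iff_vec_prod_zero by blast
  have "v $ k = 0" if "k < N" for k
  proof (rule pochhammer_ratios_independent[OF a0, where S="g ` {1..N}" and M="N - 1"])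
    show "card (g ` {1..N}) > N - 1"
      using gdist N by (simp add: card_image)
    show "k \<le> N - 1"
      using that by simp
    show "x \<ge> 0" if "x \<in> g ` {1..N}" for x
      using that gpos by force
    fix x assume "x \<in> g ` {1..N}"
    then obtain s where s: "s \<in> {1..N}" "x = g s"
      by auto
    define i where "i = s - 1"
    have i: "i < N" "x = g (i + 1)"
      using s unfolding i_def by auto
    have "0 = (Delta_mat a0 N g *\<^sub>v v) $ i"
      using v(3) i by simp
    also have "\<dots> = (\<Sum>k<N. pochhammer x k / pochhammer (x + a0) k * v $ k)"
      using i v(1) unfolding Delta_mat_def by (simp add: scalar_prod_def atLeast0LessThan)
    also have "{..<N} = {..N - 1}"
      using N by auto
    finally show "(\<Sum>k\<le>N - 1. v $ k * (pochhammer x k / pochhammer (x + a0) k)) = 0"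
      by (simp add: mult.commute)
  qed
  then have "v = 0\<^sub>v N"
    using v(1) by (intro eq_vecI) auto
  with v(2) show False
    by simp
qed

lemma lin_form_coeffs_unique:
  assumes a0: "a0 > 0" and card: "card S \<ge> N" and pos: "\<And>x. x \<in> S \<Longrightarrow> x > 0"
    and eq: "\<And>x. x \<in> S \<Longrightarrow> lin_form a0 N b x = lin_form a0 N b' x" and k: "k \<in> {1..N}"
  shows "b k = b' k"
proof -
  define c where "c k = (if k = 0 then 0 else b k - b' k)" for k
  have "c k = 0"
  proof (rule pochhammer_ratios_independent[OF a0, where S="insert 0 S" and M=N])
    have "0 \<notin> S" "finite S"
      using pos card k by (auto intro: card_ge_0_finite)
    then show "card (insert 0 S) > N"
      using card by simp
    show "x \<ge> 0" if "x \<in> insert 0 S" for x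
      using that pos by force
    show "k \<le> N"
      using k by simp
    fix x assume x: "x \<in> insert 0 S"
    have "(\<Sum>k\<le>N. c k * (pochhammer x k / pochhammer (x + a0) k))
        = (\<Sum>k = 1..N. c k * (pochhammer x k / pochhammer (x + a0) k))"
      by (rule sum.mono_neutral_right) (auto simp: c_def)
    also have "\<dots> = lin_form a0 N b x - lin_form a0 N b' x"
      by (simp add: lin_form_def c_def sum_subtractf[symmetric] algebra_simps diff_divide_distrib)
    also have "\<dots> = 0"
      using x eq by (auto simp: lin_form_def pochhammer_0_left)
    finally show "(\<Sum>k\<le>N. c k * (pochhammer x k / pochhammer (x + a0) k)) = 0" .
  qed
  then show ?thesis
    using k by (simp add: c_def)
qed

lemma lin_form_eq_0_iff_bsol:
  assumes a0: "a0 > 0" and gpos: "\<And>s. s \<in> {1..N} \<Longrightarrow> g s > 0" and gdist: "inj_on g {1..N}"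
  shows "(\<forall>s \<in> {1..N}. lin_form a0 N b (g s) = 0) \<longleftrightarrow> (\<forall>k < N. b (k + 1) = bsol a0 N g k)"
proof
  assume sol: "\<forall>s \<in> {1..N}. lin_form a0 N b (g s) = 0"
  have "b k = bsol a0 N g (k - 1)" if "k \<in> {1..N}" for k
  proof (rule lin_form_coeffs_unique[OF a0 _ _ _ that, where b'="\<lambda>k. bsol a0 N g (k - 1)"])
    show "card (g ` {1..N}) \<ge> N"
      using gdist by (simp add: card_image)
    show "x > 0" if "x \<in> g ` {1..N}" for x
      using that gpos by auto
    fix x assume "x \<in> g ` {1..N}"
    then obtain s where s: "s \<in> {1..N}" "x = g s"
      by auto
    then have "lin_form a0 N (\<lambda>k. bsol a0 N g (k - 1)) x = 0"
      using lin_form_bsol_eq_0_iff[OF a0 gpos, where x=x] gpos[OF s(1)] by simp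
    then show "lin_form a0 N b x = lin_form a0 N (\<lambda>k. bsol a0 N g (k - 1)) x"
      using sol s by simp
  qed
  then show "\<forall>k < N. b (k + 1) = bsol a0 N g k"
    by simp
next
  assume b: "\<forall>k < N. b (k + 1) = bsol a0 N g k"
  have "b k = bsol a0 N g (k - 1)" if "k \<in> {1..N}" for k
    using b[rule_format, of "k - 1"] that by auto
  then have "lin_form a0 N b x = lin_form a0 N (\<lambda>k. bsol a0 N g (k - 1)) x" for x
    unfolding lin_form_def by simp
  then show "\<forall>s \<in> {1..N}. lin_form a0 N b (g s) = 0"
    using lin_form_bsol_eq_0_iff[OF a0 gpos] gpos by (simp add: less_imp_le)
qed

theorem lemma1:
  fixes a0 :: real and N :: nat and g :: "nat \<Rightarrow> real"
  assumes a0: "a0 > 0"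
    and N: "N \<ge> 1"
    and gpos: "\<And>s. s \<in> {1..N} \<Longrightarrow> g s > 0"
    and gdist: "inj_on g {1..N}"
  shows "det (Delta_mat a0 N g) \<noteq> 0
    \<and> (\<forall>b :: nat \<Rightarrow> real.
           (\<forall>s \<in> {1..N}. lin_form a0 N b (g s) = 0)
           \<longleftrightarrow> (\<forall>k < N. b (k + 1) = bsol a0 N g k))
    \<and> (\<forall>g0 :: real. g0 > 0 \<longrightarrow> (\<forall>s \<in> {1..N}. g0 \<noteq> g s) \<longrightarrow>
           lin_form a0 N (\<lambda>k. bsol a0 N g (k - 1)) g0 \<noteq> 0)"
proof -
  have "lin_form a0 N (\<lambda>k. bsol a0 N g (k - 1)) g0 \<noteq> 0"
    if "g0 > 0" "\<forall>s \<in> {1..N}. g0 \<noteq> g s" for g0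
    using lin_form_bsol_eq_0_iff[OF a0 gpos, where x=g0] that by auto
  then show ?thesis
    using det_Delta_mat_neq_0[OF assms] lin_form_eq_0_iff_bsol[OF a0 gpos gdist] by blast
qed

end
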